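(* Let $\boldsymbol{\beta}=(\beta_1,\dots,\beta_p)$ be an alternate base and $\delta=\prod_{i=1}^p\beta_i$. Suppose there exists $\gamma>0$ such that every rational number in $[0,\gamma)$ has an eventually periodic $\boldsymbol{\beta}$-expansion. Then $\delta$ is an algebraic number and $\beta_i\in\mathbb{Q}(\delta)$ for $i=1,\dots,p$.
   Context: An alternate base is a $p$-tuple $\boldsymbol{\beta}=(\beta_1,\dots,\beta_p)$ of reals $\beta_i>1$, identified with the purely periodic sequence $(\beta_k)_{k\ge1}$, $\beta_{k+p}=\beta_k$. For $x\in[0,1)$ the $\boldsymbol{\beta}$-expansion $d_{\boldsymbol{\beta}}(x)=a_1a_2\cdots$ is given by the greedy algorithm $r_0=x$, $a_{k+1}=\lfloor\beta_{k+1}r_k\rfloor$, $r_{k+1}=\beta_{k+1}r_k-a_{k+1}$, so $x=\sum_{k\ge1}a_k/\prod_{i=1}^k\beta_i$. *)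

theory Defs
  imports "HOL-Analysis.Analysis" "HOL-Computational_Algebra.Polynomial"
begin

(* An alternate base is a nonempty list bs = [beta_1,...,beta_p] of reals > 1,
   extended periodically: the k-th base (0-indexed) is bs ! (k mod p). *)
definition alt_base :: "real list \<Rightarrow> bool" where
  "alt_base bs \<longleftrightarrow> bs \<noteq> [] \<and> (\<forall>b\<in>set bs. b > 1)"

fun alt_rem :: "real list \<Rightarrow> real \<Rightarrow> nat \<Rightarrow> real" where
  "alt_rem bs x 0 = x"
| "alt_rem bs x (Suc k) =
     bs ! (k mod length bs) * alt_rem bs x k - of_int \<lfloor>bs ! (k mod length bs) * alt_rem bs x k\<rfloor>"

(* alt_digit bs x k = a_{k+1} = floor (beta_{k+1} * r_k) *)
definition alt_digit :: "real list \<Rightarrow> real \<Rightarrow> nat \<Rightarrow> int" where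
  "alt_digit bs x k = \<lfloor>bs ! (k mod length bs) * alt_rem bs x k\<rfloor>"

definition eventually_periodic :: "(nat \<Rightarrow> 'a) \<Rightarrow> bool" where
  "eventually_periodic a \<longleftrightarrow> (\<exists>N q. q > 0 \<and> (\<forall>n\<ge>N. a (n + q) = a n))"

definition in_Q_adjoin :: "real \<Rightarrow> real \<Rightarrow> bool" where
  "in_Q_adjoin d y \<longleftrightarrow> (\<exists>P Q :: real poly. (\<forall>i. coeff P i \<in> \<rat>) \<and> (\<forall>i. coeff Q i \<in> \<rat>)
        \<and> poly Q d \<noteq> 0 \<and> y = poly P d / poly Q d)"

end

theory Submission
  imports Defs
begin

text \<open>
  A rational \<open>x\<close> whose expansion is eventually periodic can be written as
  \<open>x = \<Sum>\<^sub>j u\<^sub>j h\<^sub>j\<close> with \<open>u\<^sub>j = 1/(\<beta>\<^sub>1\<cdots>\<beta>\<^sub>j\<^sub>+\<^sub>1)\<close> for \<open>j < p\<close>, where the coefficients \<open>h\<^sub>j\<close> are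
  nonnegative and \<open>(\<delta>\<^sup>q - 1) \<delta>\<^sup>n\<^sup>+\<^sup>q h\<^sub>j\<close> is an integer polynomial in \<open>\<delta>\<close>.
  Choosing \<open>x\<close> just above \<open>u\<^sub>s \<delta>\<^sup>-\<^sup>k\<close> forces a nonzero digit at position \<open>kp + s\<close> and
  leaves almost nothing for the other digits, so \<open>\<delta>\<^sup>k (h\<^sub>0, \<dots>, h\<^sub>p\<^sub>-\<^sub>1)\<close> is a vector over
  \<open>\<rat>(\<delta>)\<close> close to the unit vector \<open>e\<^sub>s\<close> whose pairing with \<open>u\<close> lies in \<open>\<rat>(\<delta>)\<close>.
  These vectors form a strictly diagonally dominant system, hence all \<open>u\<^sub>j\<close> lie in
  \<open>\<rat>(\<delta>)\<close>, and so do the quotients \<open>\<beta>\<^sub>j\<^sub>+\<^sub>1 = u\<^sub>j\<^sub>-\<^sub>1 / u\<^sub>j\<close>. Writing \<open>u\<^sub>j = R\<^sub>j(\<delta>)/Q(\<delta>)\<close>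
  with integer polynomials and taking \<open>x = 1/N\<close> for an integer \<open>N\<close> exceeding the leading
  coefficient of \<open>Q\<close>, the representation becomes an identity \<open>F(\<delta>) = N G(\<delta>)\<close> between
  integer polynomials whose leading coefficients rule out \<open>F = N G\<close>; so \<open>\<delta>\<close> is algebraic.
\<close>

section \<open>The field \<open>\<rat>(d)\<close> with integral presentations\<close>

definition int_poly :: "real poly \<Rightarrow> bool" where
  "int_poly P \<longleftrightarrow> (\<forall>i. coeff P i \<in> \<int>)"

lemma int_poly_add: "int_poly P \<Longrightarrow> int_poly Q \<Longrightarrow> int_poly (P + Q)"
  and int_poly_diff: "int_poly P \<Longrightarrow> int_poly Q \<Longrightarrow> int_poly (P - Q)"
  and int_poly_smult: "c \<in> \<int> \<Longrightarrow> int_poly P \<Longrightarrow> int_poly (smult c P)"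
  and int_poly_monom: "c \<in> \<int> \<Longrightarrow> int_poly (monom c k)"
  unfolding int_poly_def by simp_all

lemma int_poly_0 [simp]: "int_poly 0"
  unfolding int_poly_def by simp

lemma int_poly_mult: "int_poly P \<Longrightarrow> int_poly Q \<Longrightarrow> int_poly (P * Q)"
  unfolding int_poly_def coeff_mult by (auto intro: Ints_mult)

lemma int_poly_one: "int_poly 1"
  using int_poly_monom[of 1 0] by (simp add: one_poly_eq_simps)

lemma int_poly_const: "c \<in> \<int> \<Longrightarrow> int_poly [:c:]"
  unfolding int_poly_def by (simp add: coeff_pCons split: nat.split)

lemma int_poly_sum: "(\<And>j. j \<in> A \<Longrightarrow> int_poly (f j)) \<Longrightarrow> int_poly (\<Sum>j\<in>A. f j)"
  by (induction A rule: infinite_finite_induct) (simp_all add: int_poly_add)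

definition Q_adjoin :: "real \<Rightarrow> real set" where
  "Q_adjoin d = {poly P d / poly Q d | P Q. int_poly P \<and> int_poly Q \<and> poly Q d \<noteq> 0}"

lemma Q_adjoinI: "int_poly P \<Longrightarrow> int_poly Q \<Longrightarrow> poly Q d \<noteq> 0 \<Longrightarrow> poly P d / poly Q d \<in> Q_adjoin d"
  unfolding Q_adjoin_def by blast

lemma Q_adjoinE:
  assumes "y \<in> Q_adjoin d"
  obtains P Q where "int_poly P" "int_poly Q" "poly Q d \<noteq> 0" "y = poly P d / poly Q d"
  using assms unfolding Q_adjoin_def by blast

lemma in_Q_adjoin_if_mem_Q_adjoin:
  assumes "y \<in> Q_adjoin d"
  shows "in_Q_adjoin d y"
proof -
  obtain P Q where PQ: "int_poly P" "int_poly Q" "poly Q d \<noteq> 0" "y = poly P d / poly Q d"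
    using assms by (rule Q_adjoinE)
  then have "\<forall>i. coeff P i \<in> \<rat>" "\<forall>i. coeff Q i \<in> \<rat>"
    unfolding int_poly_def using Ints_subset_Rats by auto
  with PQ(3,4) show ?thesis
    unfolding in_Q_adjoin_def by blast
qed

lemma Q_adjoin_poly: "int_poly P \<Longrightarrow> poly P d \<in> Q_adjoin d"
  using Q_adjoinI[OF _ int_poly_one, of P d] by simp

lemma Q_adjoin_Rats: "r \<in> \<rat> \<Longrightarrow> r \<in> Q_adjoin d"
proof (erule Rats_cases')
  fix a b :: int assume "b > 0" "r = of_int a / of_int b"
  then have "r = poly [:of_int a:] d / poly [:of_int b:] d"
    by simp
  then show "r \<in> Q_adjoin d"
    using \<open>b > 0\<close> by (simp only:) (intro Q_adjoinI int_poly_const; simp)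
qed

lemma Q_adjoin_self: "d \<in> Q_adjoin d"
  using Q_adjoin_poly[OF int_poly_monom, of 1 1 d] by (simp add: poly_monom)

lemma Q_adjoin_add:
  assumes "a \<in> Q_adjoin d" "b \<in> Q_adjoin d"
  shows "a + b \<in> Q_adjoin d"
proof -
  obtain P Q where a: "int_poly P" "int_poly Q" "poly Q d \<noteq> 0" "a = poly P d / poly Q d"
    using assms(1) by (rule Q_adjoinE)
  obtain P' Q' where b: "int_poly P'" "int_poly Q'" "poly Q' d \<noteq> 0" "b = poly P' d / poly Q' d"
    using assms(2) by (rule Q_adjoinE)
  have "a + b = poly (P * Q' + P' * Q) d / poly (Q * Q') d"
    unfolding a(4) b(4) using a(3) b(3) by (simp add: field_simps)
  then show ?thesis
    using a b by (simp only:) (intro Q_adjoinI int_poly_add int_poly_mult; simp)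
qed

lemma Q_adjoin_mult:
  assumes "a \<in> Q_adjoin d" "b \<in> Q_adjoin d"
  shows "a * b \<in> Q_adjoin d"
proof -
  obtain P Q where a: "int_poly P" "int_poly Q" "poly Q d \<noteq> 0" "a = poly P d / poly Q d"
    using assms(1) by (rule Q_adjoinE)
  obtain P' Q' where b: "int_poly P'" "int_poly Q'" "poly Q' d \<noteq> 0" "b = poly P' d / poly Q' d"
    using assms(2) by (rule Q_adjoinE)
  have "a * b = poly (P * P') d / poly (Q * Q') d"
    using a b by simp
  then show ?thesis
    using a b by (simp only:) (intro Q_adjoinI int_poly_mult; simp)
qed

lemma Q_adjoin_divide:
  assumes "a \<in> Q_adjoin d" "b \<in> Q_adjoin d"
  shows "a / b \<in> Q_adjoin d"
proof (cases "b = 0")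
  case True
  then show ?thesis using Q_adjoin_Rats[of 0] by simp
next
  case False
  obtain P Q where a: "int_poly P" "int_poly Q" "poly Q d \<noteq> 0" "a = poly P d / poly Q d"
    using assms(1) by (rule Q_adjoinE)
  obtain P' Q' where b: "int_poly P'" "int_poly Q'" "poly Q' d \<noteq> 0" "b = poly P' d / poly Q' d"
    using assms(2) by (rule Q_adjoinE)
  have "poly P' d \<noteq> 0" using b False by simp
  moreover have "a / b = poly (P * Q') d / poly (Q * P') d"
    using a b \<open>poly P' d \<noteq> 0\<close> by simp
  ultimately show ?thesis
    using a b by (simp only:) (intro Q_adjoinI int_poly_mult; simp)
qed

lemma Q_adjoin_diff: "a \<in> Q_adjoin d \<Longrightarrow> b \<in> Q_adjoin d \<Longrightarrow> a - b \<in> Q_adjoin d"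
  using Q_adjoin_add[of a d "(-1) * b"] Q_adjoin_mult[OF Q_adjoin_Rats[of "-1"]] by simp

lemma Q_adjoin_sum: "(\<And>j. j \<in> A \<Longrightarrow> f j \<in> Q_adjoin d) \<Longrightarrow> (\<Sum>j\<in>A. f j) \<in> Q_adjoin d"
  by (induction A rule: infinite_finite_induct) (auto intro: Q_adjoin_add Q_adjoin_Rats)

lemma Q_adjoin_power: "a \<in> Q_adjoin d \<Longrightarrow> a ^ n \<in> Q_adjoin d"
  by (induction n) (auto intro: Q_adjoin_mult Q_adjoin_Rats)

lemma Q_adjoin_common_denominator:
  assumes "finite A" "\<And>j. j \<in> A \<Longrightarrow> y j \<in> Q_adjoin d"
  obtains Q R where "int_poly Q" "poly Q d \<noteq> 0"
    "\<And>j. j \<in> A \<Longrightarrow> int_poly (R j) \<and> y j * poly Q d = poly (R j) d"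
  using assms
proof (induction A arbitrary: thesis rule: finite_induct)
  case empty
  then show ?case using int_poly_one by fastforce
next
  case (insert j0 A)
  obtain Q R where QR: "int_poly Q" "poly Q d \<noteq> 0"
    "\<And>j. j \<in> A \<Longrightarrow> int_poly (R j) \<and> y j * poly Q d = poly (R j) d"
    using insert.IH insert.prems(2) by blast
  obtain P' Q' where y0: "int_poly P'" "int_poly Q'" "poly Q' d \<noteq> 0" "y j0 = poly P' d / poly Q' d"
    using insert.prems(2) by (blast elim: Q_adjoinE)
  show ?case
  proof (rule insert.prems(1)[of "Q * Q'" "\<lambda>j. if j = j0 then P' * Q else R j * Q'"])
    show "int_poly (Q * Q')" "poly (Q * Q') d \<noteq> 0"
      using QR y0 by (simp_all add: int_poly_mult)
    show "int_poly (if j = j0 then P' * Q else R j * Q') \<and>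
        y j * poly (Q * Q') d = poly (if j = j0 then P' * Q else R j * Q') d" if "j \<in> insert j0 A" for j
      using that QR y0 by (auto simp: int_poly_mult)
  qed
qed

lemma algebraic_if_poly_eq_multiple:
  fixes F G :: "real poly" and N :: nat
  assumes "int_poly F" "int_poly G" "F \<noteq> 0" "\<bar>lead_coeff F\<bar> < N"
    and root: "poly F d = N * poly G d"
  shows "algebraic d"
proof (rule algebraicI)
  define \<Phi> where "\<Phi> = F - smult (of_nat N) G"
  show "coeff \<Phi> i \<in> \<int>" for i
    using assms(1,2) unfolding \<Phi>_def int_poly_def by simp
  show "poly \<Phi> d = 0"
    using root unfolding \<Phi>_def by simp
  show "\<Phi> \<noteq> 0"
  proof
    assume "\<Phi> = 0"
    then have lead: "lead_coeff F = N * coeff G (degree F)"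
      unfolding \<Phi>_def by simp
    have "coeff G (degree F) \<in> \<int>" "coeff G (degree F) \<noteq> 0"
      using assms(2,3) lead unfolding int_poly_def by auto
    then have "\<bar>coeff G (degree F)\<bar> \<ge> 1"
      by (rule Ints_nonzero_abs_ge1)
    then have "\<bar>lead_coeff F\<bar> \<ge> N"
      unfolding lead abs_mult by (simp add: mult_le_cancel_left1)
    then show False
      using assms(4) by simp
  qed
qed

lemma lead_coeff_monom_minus_1:
  assumes "q > 0"
  shows "lead_coeff (monom 1 q - 1 :: 'a::comm_ring_1 poly) = 1"
proof -
  have "degree (- 1 :: 'a poly) < degree (monom (1::'a) q)"
    using assms by (simp add: degree_monom_eq)
  then have "lead_coeff (- 1 + monom 1 q :: 'a poly) = 1"
    by (metis lead_coeff_add_le lead_coeff_monom)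
  then show ?thesis
    by simp
qed

section \<open>Strictly diagonally dominant systems\<close>

definition strictly_diag_dominant :: "nat \<Rightarrow> (nat \<Rightarrow> nat \<Rightarrow> real) \<Rightarrow> bool" where
  "strictly_diag_dominant n M \<longleftrightarrow> (\<forall>i<n. (\<Sum>j\<in>{..<n} - {i}. \<bar>M i j\<bar>) < \<bar>M i i\<bar>)"

lemma strictly_diag_dominant_diag_nonzero:
  assumes "strictly_diag_dominant n M" "i < n"
  shows "M i i \<noteq> 0"
proof -
  have "0 \<le> (\<Sum>j\<in>{..<n} - {i}. \<bar>M i j\<bar>)"
    by (simp add: sum_nonneg)
  also have "\<dots> < \<bar>M i i\<bar>"
    using assms unfolding strictly_diag_dominant_def by simp
  finally show ?thesis
    by simp
qed

lemma strictly_diag_dominant_eliminate_last: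
  assumes dom: "strictly_diag_dominant (Suc n) M"
  shows "strictly_diag_dominant n (\<lambda>i j. M i j - M i n * M n j / M n n)"
  unfolding strictly_diag_dominant_def
proof (intro allI impI)
  fix i assume i: "i < n"
  let ?M' = "\<lambda>i j. M i j - M i n * M n j / M n n"
  have Mnn: "M n n \<noteq> 0"
    using strictly_diag_dominant_diag_nonzero[OF dom] by simp
  define A where "A = (\<Sum>j\<in>{..<n} - {i}. \<bar>M i j\<bar>)"
  define B where "B = (\<Sum>j\<in>{..<n} - {i}. \<bar>M n j\<bar>)"
  define c where "c = \<bar>M i n\<bar> / \<bar>M n n\<bar>"
  have "{..<Suc n} - {i} = insert n ({..<n} - {i})" "{..<Suc n} - {n} = {..<n}"
    using i by auto
  then have "(\<Sum>j\<in>{..<Suc n} - {i}. \<bar>M i j\<bar>) = A + \<bar>M i n\<bar>"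
    and "(\<Sum>j\<in>{..<Suc n} - {n}. \<bar>M n j\<bar>) = B + \<bar>M n i\<bar>"
    unfolding A_def B_def using sum.remove[of "{..<n}" i "\<lambda>j. \<bar>M n j\<bar>"] i by simp_all
  moreover have "(\<Sum>j\<in>{..<Suc n} - {i}. \<bar>M i j\<bar>) < \<bar>M i i\<bar>"
    and "(\<Sum>j\<in>{..<Suc n} - {n}. \<bar>M n j\<bar>) < \<bar>M n n\<bar>"
    using dom i unfolding strictly_diag_dominant_def by simp_all
  ultimately have row_i: "A + \<bar>M i n\<bar> < \<bar>M i i\<bar>" and row_n: "B + \<bar>M n i\<bar> < \<bar>M n n\<bar>"
    by simp_all
  have "(\<Sum>j\<in>{..<n} - {i}. \<bar>?M' i j\<bar>) \<le> (\<Sum>j\<in>{..<n} - {i}. \<bar>M i j\<bar> + c * \<bar>M n j\<bar>)"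
    by (rule sum_mono) (simp add: c_def abs_mult abs_divide order_trans[OF abs_triangle_ineq4])
  also have "\<dots> = A + c * B"
    unfolding A_def B_def by (simp add: sum.distrib sum_distrib_left)
  also have "c * B \<le> c * (\<bar>M n n\<bar> - \<bar>M n i\<bar>)"
    using row_n unfolding c_def by (intro mult_left_mono) auto
  also have "c * (\<bar>M n n\<bar> - \<bar>M n i\<bar>) = \<bar>M i n\<bar> - \<bar>M i n * M n i / M n n\<bar>"
    unfolding c_def using Mnn by (simp add: field_simps abs_mult abs_divide)
  also have "A + (\<bar>M i n\<bar> - \<bar>M i n * M n i / M n n\<bar>) < \<bar>M i i\<bar> - \<bar>M i n * M n i / M n n\<bar>"
    using row_i by simp
  also have "\<dots> \<le> \<bar>?M' i i\<bar>"
    by (rule abs_triangle_ineq2)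
  finally show "(\<Sum>j\<in>{..<n} - {i}. \<bar>?M' i j\<bar>) < \<bar>?M' i i\<bar>"
    by simp
qed

lemma strictly_diag_dominant_solution_in_Q_adjoin:
  assumes "strictly_diag_dominant n M"
    and "\<forall>i<n. \<forall>j<n. M i j \<in> Q_adjoin d"
    and "\<forall>i<n. (\<Sum>j<n. M i j * u j) \<in> Q_adjoin d"
  shows "\<forall>i<n. u i \<in> Q_adjoin d"
  using assms
proof (induction n arbitrary: M)
  case 0
  then show ?case by simp
next
  case (Suc n)
  note dom = Suc.prems(1) and entries = Suc.prems(2) and rhs = Suc.prems(3)
  define M' where "M' i j = M i j - M i n * M n j / M n n" for i j
  have Mnn: "M n n \<noteq> 0"
    using strictly_diag_dominant_diag_nonzero[OF dom] by simp
  have row_split: "(\<Sum>j<Suc n. M i j * u j) = (\<Sum>j<n. M i j * u j) + M i n * u n" for i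
    by simp
  have "(\<Sum>j<n. M' i j * u j) = (\<Sum>j<Suc n. M i j * u j) - M i n / M n n * (\<Sum>j<Suc n. M n j * u j)" for i
  proof -
    have "(\<Sum>j<n. M' i j * u j) = (\<Sum>j<n. M i j * u j) - M i n / M n n * (\<Sum>j<n. M n j * u j)"
      unfolding M'_def by (simp add: sum_subtractf sum_distrib_left algebra_simps)
    then show ?thesis
      unfolding row_split using Mnn by (simp add: field_simps)
  qed
  then have "\<forall>i<n. (\<Sum>j<n. M' i j * u j) \<in> Q_adjoin d"
    using entries rhs by (auto intro!: Q_adjoin_diff Q_adjoin_mult Q_adjoin_divide)
  moreover have "\<forall>i<n. \<forall>j<n. M' i j \<in> Q_adjoin d"
    using entries unfolding M'_def by (auto intro!: Q_adjoin_diff Q_adjoin_mult Q_adjoin_divide)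
  ultimately have IH: "\<forall>i<n. u i \<in> Q_adjoin d"
    using Suc.IH strictly_diag_dominant_eliminate_last[OF dom] unfolding M'_def by blast
  have u_n: "u n = ((\<Sum>j<Suc n. M n j * u j) - (\<Sum>j<n. M n j * u j)) / M n n"
    using Mnn by (simp add: row_split)
  have "(\<Sum>j<n. M n j * u j) \<in> Q_adjoin d"
    using IH entries by (auto intro!: Q_adjoin_sum Q_adjoin_mult)
  then have "u n \<in> Q_adjoin d"
    using entries rhs by (subst u_n) (intro Q_adjoin_diff Q_adjoin_divide; simp)
  with IH show ?case
    using less_Suc_eq by auto
qed

lemma weighted_sum_concentrated:
  fixes u h :: "nat \<Rightarrow> real"
  assumes "finite J" "s \<in> J" "j \<in> J"
    and pos: "\<And>i. i \<in> J \<Longrightarrow> u i > 0" and nonneg: "\<And>i. i \<in> J \<Longrightarrow> h i \<ge> 0"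
    and "c \<le> h s" and sum: "(\<Sum>i\<in>J. u i * h i) < u s * c + \<eta>"
  shows "\<bar>h j - (if j = s then c else 0)\<bar> < \<eta> / u j"
proof -
  define t where "t i = u i * (h i - (if i = s then c else 0))" for i
  have t_nonneg: "t i \<ge> 0" if "i \<in> J" for i
    using pos[OF that] nonneg[OF that] \<open>c \<le> h s\<close> unfolding t_def by (cases "i = s") auto
  have "t i = u i * h i - (if i = s then u s * c else 0)" for i
    unfolding t_def by (simp add: right_diff_distrib)
  then have "(\<Sum>i\<in>J. t i) = (\<Sum>i\<in>J. u i * h i) - u s * c"
    using assms(1,2) by (simp add: sum_subtractf sum.delta)
  then have "t j < \<eta>"
    using member_le_sum[of j J t] t_nonneg assms(1,3) sum by simp
  moreover have "\<bar>h j - (if j = s then c else 0)\<bar> = t j / u j"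
  proof -
    have "h j - (if j = s then c else 0) \<ge> 0"
      using t_nonneg[OF assms(3)] pos[OF assms(3)] unfolding t_def by (simp add: zero_le_mult_iff)
    then show ?thesis
      using pos[OF assms(3)] unfolding t_def by simp
  qed
  ultimately show ?thesis
    using pos[OF assms(3)] by (simp add: divide_strict_right_mono)
qed

section \<open>Expansions in an alternate base\<close>

locale alt_base_expansion =
  fixes bs :: "real list"
  assumes alt_base: "alt_base bs"
begin

abbreviation p :: nat where "p \<equiv> length bs"
abbreviation \<delta> :: real where "\<delta> \<equiv> prod_list bs"
abbreviation rem :: "real \<Rightarrow> nat \<Rightarrow> real" where "rem x k \<equiv> alt_rem bs x k"
abbreviation digit :: "real \<Rightarrow> nat \<Rightarrow> int" where "digit x k \<equiv> alt_digit bs x k"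

text \<open>
  Indices start at \<open>0\<close>: \<open>base i\<close> is \<open>\<beta>\<^sub>i\<^sub>+\<^sub>1\<close>, \<open>base_prod k = \<beta>\<^sub>1\<cdots>\<beta>\<^sub>k\<close>, and
  \<open>place_value i\<close> is the weight of the digit \<open>a\<^sub>i\<^sub>+\<^sub>1 = digit x i\<close>.
\<close>
definition base :: "nat \<Rightarrow> real" where
  "base i = bs ! (i mod p)"

definition base_prod :: "nat \<Rightarrow> real" where
  "base_prod k = (\<Prod>i<k. base i)"

definition place_value :: "nat \<Rightarrow> real" where
  "place_value i = 1 / base_prod (Suc i)"

lemma length_pos: "p > 0"
  using alt_base unfolding alt_base_def by simp

lemma base_gt_1: "base i > 1"
  using alt_base length_pos unfolding alt_base_def base_def by simp

lemma base_prod_0 [simp]: "base_prod 0 = 1"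
  and base_prod_Suc: "base_prod (Suc k) = base_prod k * base k"
  unfolding base_prod_def by simp_all

lemma base_prod_pos: "base_prod k > 0"
  unfolding base_prod_def by (rule prod_pos) (metis base_gt_1 less_trans zero_less_one)

lemma strict_mono_base_prod: "strict_mono base_prod"
  unfolding strict_mono_Suc_iff base_prod_Suc using base_prod_pos base_gt_1 by simp

lemma base_prod_ge_1: "base_prod k \<ge> 1"
  using strict_mono_less_eq[OF strict_mono_base_prod, of 0 k] by simp

lemma base_prod_length: "base_prod p = \<delta>"
proof -
  have "base_prod p = (\<Prod>i<p. bs ! i)"
    unfolding base_prod_def base_def by (rule prod.cong) auto
  also have "\<dots> = \<delta>"
    by (simp add: prod.list_conv_set_nth atLeast0LessThan)
  finally show ?thesis .
qed

lemma base_prod_add_length: "base_prod (m + p) = base_prod m * \<delta>"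
proof (induction m)
  case (Suc m)
  have "base (m + p) = base m"
    unfolding base_def by simp
  then show ?case
    using Suc by (simp add: base_prod_Suc)
qed (simp add: base_prod_length)

lemma base_prod_blocks: "base_prod (k * p + j) = \<delta> ^ k * base_prod j"
proof (induction k)
  case (Suc k)
  have "base_prod (Suc k * p + j) = base_prod ((k * p + j) + p)"
    by (simp add: algebra_simps)
  then show ?case
    using Suc base_prod_add_length by simp
qed simp

lemma delta_gt_1: "\<delta> > 1"
  using strict_monoD[OF strict_mono_base_prod length_pos] base_prod_length by simp

lemma place_value_pos: "place_value i > 0"
  unfolding place_value_def using base_prod_pos by simp

lemma place_value_blocks: "place_value i = place_value (i mod p) / \<delta> ^ (i div p)"
  using base_prod_blocks[of "i div p" "Suc (i mod p)"] unfolding place_value_def by simp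

lemma base_prod_le_delta: "j < p \<Longrightarrow> base_prod (Suc j) \<le> \<delta>"
  using strict_mono_less_eq[OF strict_mono_base_prod, of "Suc j" p] base_prod_length by simp

lemma rem_Suc: "rem x (Suc k) = base k * rem x k - of_int \<lfloor>base k * rem x k\<rfloor>"
  by (simp add: base_def)

lemma digit_eq: "digit x k = \<lfloor>base k * rem x k\<rfloor>"
  by (simp add: alt_digit_def base_def)

lemma rem_bounds: "0 \<le> x \<Longrightarrow> x < 1 \<Longrightarrow> 0 \<le> rem x k \<and> rem x k < 1"
  by (cases k) (auto simp: rem_Suc floor_less_cancel)

lemma digit_nonneg: "0 \<le> x \<Longrightarrow> x < 1 \<Longrightarrow> digit x k \<ge> 0"
  unfolding digit_eq using rem_bounds[of x k] base_gt_1[of k] by simp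

lemma expansion: "x = (\<Sum>i<k. digit x i * place_value i) + rem x k / base_prod k"
proof (induction k)
  case (Suc k)
  have "rem x (Suc k) / base_prod (Suc k) = rem x k / base_prod k - digit x k * place_value k"
    unfolding rem_Suc digit_eq place_value_def base_prod_Suc using base_prod_pos[of k] base_gt_1[of k]
    by (simp add: field_simps)
  then show ?case
    using Suc by simp
qed simp

lemma rem_eq_scaled:
  assumes "0 \<le> x" "base_prod K * x < 1" "i \<le> K"
  shows "rem x i = base_prod i * x"
  using assms(3)
proof (induction i)
  case (Suc i)
  have "base_prod (Suc i) * x \<le> base_prod K * x"
    using strict_mono_less_eq[OF strict_mono_base_prod] Suc.prems assms(1) by (simp add: mult_right_mono)
  then have "\<lfloor>base_prod (Suc i) * x\<rfloor> = 0"
    using assms base_prod_pos[of "Suc i"] by (simp add: floor_eq_iff)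
  then show ?case
    using Suc by (simp add: base_def base_prod_Suc mult_ac)
qed simp

lemma digit_ge_1:
  assumes "0 \<le> x" "base_prod K * x < 1" "1 \<le> base_prod (Suc K) * x"
  shows "digit x K \<ge> 1"
  using rem_eq_scaled[OF assms(1,2), of K] assms(3)
  by (simp add: digit_eq base_prod_Suc le_floor_iff mult_ac)

text \<open>Equal digits make the floor terms of \<open>rem_Suc\<close> cancel.\<close>
lemma rem_diff_if_digits_shift:
  assumes "\<forall>i. digit x (N + i) = digit x (N + L + i)" "p dvd L"
  shows "rem x (N + m) - rem x (N + L + m) = (rem x N - rem x (N + L)) * (base_prod (N + m) / base_prod N)"
proof (induction m)
  case 0
  then show ?case using base_prod_pos[of N] by simp
next
  case (Suc m)
  have base_L: "base (N + L + m) = base (N + m)"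
    using assms(2) unfolding base_def by (auto simp: add.commute add.left_commute)
  have "rem x (N + Suc m) - rem x (N + L + Suc m)
      = base (N + m) * (rem x (N + m) - rem x (N + L + m)) - (digit x (N + m) - digit x (N + L + m))"
    using rem_Suc[of x "N + m"] rem_Suc[of x "N + L + m"] base_L by (simp add: digit_eq algebra_simps)
  also have "\<dots> = (rem x N - rem x (N + L)) * (base_prod (N + Suc m) / base_prod N)"
    using Suc assms(1) by (simp add: base_prod_Suc)
  finally show ?case .
qed

text \<open>The difference of the two remainders grows like \<open>\<delta>\<^sup>k\<close> but stays below \<open>1\<close>.\<close>
lemma rem_eq_if_digits_shift:
  assumes "0 \<le> x" "x < 1"
    and shift: "\<forall>i. digit x (N + i) = digit x (N + L + i)" "p dvd L"
  shows "rem x N = rem x (N + L)"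
proof (rule ccontr)
  assume "rem x N \<noteq> rem x (N + L)"
  then have gap: "\<bar>rem x N - rem x (N + L)\<bar> > 0" by simp
  obtain k where k: "1 / \<bar>rem x N - rem x (N + L)\<bar> < \<delta> ^ k"
    using real_arch_pow[OF delta_gt_1] by blast
  have "base_prod (N + k * p) = \<delta> ^ k * base_prod N"
    using base_prod_blocks[of k N] by (simp add: add.commute)
  then have "\<bar>rem x (N + k * p) - rem x (N + L + k * p)\<bar> = \<bar>rem x N - rem x (N + L)\<bar> * \<delta> ^ k"
    using rem_diff_if_digits_shift[OF shift, of "k * p"] base_prod_pos[of N] delta_gt_1
    by (simp add: abs_mult)
  also have "\<dots> > 1"
    using k gap by (simp add: field_simps)
  finally show False
    using rem_bounds[OF assms(1,2), of "N + k * p"] rem_bounds[OF assms(1,2), of "N + L + k * p"] by linarith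
qed

lemma rem_block_periodic:
  assumes "0 \<le> x" "x < 1" "eventually_periodic (digit x)"
  obtains n q where "n \<ge> m" "q > 0" "rem x (n * p) = rem x ((n + q) * p)"
proof -
  obtain N0 Q where Q: "Q > 0" "\<forall>n\<ge>N0. digit x (n + Q) = digit x n"
    using assms(3) unfolding eventually_periodic_def by blast
  have multiple: "digit x (i + m * Q) = digit x i" if "i \<ge> N0" for i m
  proof (induction m)
    case (Suc m)
    have "digit x (i + Suc m * Q) = digit x ((i + m * Q) + Q)"
      by (simp add: algebra_simps)
    also have "\<dots> = digit x (i + m * Q)"
      using Q(2) that by simp
    finally show ?case
      using Suc by simp
  qed simp
  define n where "n = max m N0"
  have "N0 \<le> n * 1"
    unfolding n_def by simp
  also have "\<dots> \<le> n * p"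
    using length_pos by (intro mult_le_mono2) linarith
  finally have "\<forall>i. digit x (n * p + i) = digit x (n * p + Q * p + i)"
    using multiple by (metis add.assoc add.commute mult.commute trans_le_add1)
  then have "rem x (n * p) = rem x (n * p + Q * p)"
    by (rule rem_eq_if_digits_shift[OF assms(1,2)]) simp
  then have "rem x (n * p) = rem x ((n + Q) * p)"
    by (simp add: algebra_simps)
  then show ?thesis
    by (intro that[of n Q] Q(1)) (simp add: n_def)
qed

section \<open>Place-value representation of eventually periodic expansions\<close>

definition tail_weight :: "nat \<Rightarrow> nat \<Rightarrow> nat \<Rightarrow> real" where
  "tail_weight n q i = (if i < n * p then 1 else \<delta> ^ q / (\<delta> ^ q - 1))"

text \<open>
  Eliminating the common remainder \<open>\<rho>\<close> from \<open>x = S\<^sub>n\<^sub>p + \<rho>/\<delta>\<^sup>n\<close> and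
  \<open>x = S\<^sub>(\<^sub>n\<^sub>+\<^sub>q\<^sub>)\<^sub>p + \<rho>/\<delta>\<^sup>n\<^sup>+\<^sup>q\<close>, where \<open>S\<^sub>m\<close> is the partial sum of the expansion.
\<close>
lemma expansion_periodic_remainder:
  assumes q: "q > 0" and per: "rem x (n * p) = rem x ((n + q) * p)"
  shows "x = (\<Sum>i<(n + q) * p. digit x i * tail_weight n q i * place_value i)"
proof -
  define \<rho> where "\<rho> = rem x (n * p)"
  define S where "S = (\<Sum>i<n * p. digit x i * place_value i)"
  define T where "T = (\<Sum>i\<in>{n * p..<(n + q) * p}. digit x i * place_value i)"
  have split: "(\<Sum>i<(n + q) * p. f i) = (\<Sum>i<n * p. f i) + (\<Sum>i\<in>{n * p..<(n + q) * p}. f i)" for f :: "nat \<Rightarrow> real"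
    using sum.atLeastLessThan_concat[of 0 "n * p" "(n + q) * p" f] by (simp add: lessThan_atLeast0)
  have x1: "x = S + \<rho> / \<delta> ^ n"
    using expansion[of x "n * p"] base_prod_blocks[of n 0] unfolding S_def \<rho>_def by simp
  have x2: "x = S + T + \<rho> / \<delta> ^ n / \<delta> ^ q"
    using expansion[of x "(n + q) * p"] base_prod_blocks[of "n + q" 0] per split
    unfolding S_def T_def \<rho>_def by (simp add: power_add)
  have dq: "\<delta> ^ q > 1"
    using delta_gt_1 q by simp
  have eliminate: "A = D / (D - 1) * (A - A / D)" if "D > 1" for A D :: real
    using that by (simp add: field_simps)
  have T_eq: "T = \<rho> / \<delta> ^ n - \<rho> / \<delta> ^ n / \<delta> ^ q"
    using x1 x2 by linarith
  have "\<rho> / \<delta> ^ n = \<delta> ^ q / (\<delta> ^ q - 1) * T"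
    unfolding T_eq by (rule eliminate[OF dq])
  then have "x = S + \<delta> ^ q / (\<delta> ^ q - 1) * T"
    using x1 by simp
  also have "\<dots> = (\<Sum>i<(n + q) * p. digit x i * tail_weight n q i * place_value i)"
    unfolding split S_def T_def tail_weight_def sum_distrib_left by (auto intro!: sum.cong arg_cong2[where f = "(+)"])
  finally show ?thesis .
qed

definition place_coeff :: "real \<Rightarrow> nat \<Rightarrow> nat \<Rightarrow> nat \<Rightarrow> real" where
  "place_coeff x n q j =
     (\<Sum>i<(n + q) * p. if i mod p = j then digit x i * tail_weight n q i / \<delta> ^ (i div p) else 0)"

lemma expansion_place_coeff:
  assumes "q > 0" "rem x (n * p) = rem x ((n + q) * p)"
  shows "x = (\<Sum>j<p. place_value j * place_coeff x n q j)"
proof -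
  have regroup: "place_value j * (if i mod p = j then digit x i * tail_weight n q i / \<delta> ^ (i div p) else 0)
      = (if j = i mod p then digit x i * tail_weight n q i * place_value i else 0)" for i j
    by (simp add: place_value_blocks[of i])
  have "(\<Sum>j<p. place_value j * place_coeff x n q j)
      = (\<Sum>i<(n + q) * p. \<Sum>j<p. if j = i mod p then digit x i * tail_weight n q i * place_value i else 0)"
    unfolding place_coeff_def sum_distrib_left regroup by (rule sum.swap)
  also have "\<dots> = (\<Sum>i<(n + q) * p. digit x i * tail_weight n q i * place_value i)"
    using length_pos by (simp add: sum.delta)
  finally show ?thesis
    using expansion_periodic_remainder[OF assms] by linarith
qed

lemma tail_weight_nonneg: "q > 0 \<Longrightarrow> tail_weight n q i \<ge> 0"
  unfolding tail_weight_def using delta_gt_1 by (simp add: less_imp_le)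

lemma place_coeff_nonneg: "0 \<le> x \<Longrightarrow> x < 1 \<Longrightarrow> q > 0 \<Longrightarrow> place_coeff x n q j \<ge> 0"
  unfolding place_coeff_def using digit_nonneg tail_weight_nonneg delta_gt_1
  by (auto intro!: sum_nonneg divide_nonneg_nonneg mult_nonneg_nonneg)

lemma place_coeff_ge_digit:
  assumes "0 \<le> x" "x < 1" "q > 0" "K < n * p"
  shows "digit x K / \<delta> ^ (K div p) \<le> place_coeff x n q (K mod p)"
proof -
  let ?t = "\<lambda>i. if i mod p = K mod p then digit x i * tail_weight n q i / \<delta> ^ (i div p) else 0"
  have "?t K \<le> (\<Sum>i<(n + q) * p. ?t i)"
    using assms(4) digit_nonneg[OF assms(1,2)] tail_weight_nonneg[OF assms(3)] delta_gt_1
    by (intro member_le_sum) (auto simp: add_mult_distrib intro!: divide_nonneg_nonneg mult_nonneg_nonneg)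
  then have "digit x K * tail_weight n q K / \<delta> ^ (K div p) \<le> place_coeff x n q (K mod p)"
    unfolding place_coeff_def by simp
  then show ?thesis
    using assms(4) unfolding tail_weight_def by simp
qed

lemma tail_weight_scaled:
  assumes "q > 0" "i < (n + q) * p"
  shows "(\<delta> ^ q - 1) * \<delta> ^ (n + q) * (tail_weight n q i / \<delta> ^ (i div p))
       = poly (monom 1 (n + q - i div p) * (if i < n * p then monom 1 q - 1 else monom 1 q)) \<delta>"
proof -
  have "i div p < n + q"
    using assms(2) length_pos by (simp add: div_less_iff_less_mult)
  then have "\<delta> ^ (n + q) = \<delta> ^ (n + q - i div p) * \<delta> ^ (i div p)"
    by (simp flip: power_add)
  moreover have "\<delta> ^ q - 1 \<noteq> 0" "\<delta> \<noteq> 0"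
    using one_less_power[OF delta_gt_1 assms(1)] delta_gt_1 by auto
  ultimately show ?thesis
    unfolding tail_weight_def by (simp add: poly_monom field_simps)
qed

lemma place_coeff_int_poly:
  assumes "q > 0"
  obtains H where "int_poly H" "(\<delta> ^ q - 1) * \<delta> ^ (n + q) * place_coeff x n q j = poly H \<delta>"
proof -
  define W :: "nat \<Rightarrow> real poly"
    where "W i = monom 1 (n + q - i div p) * (if i < n * p then monom 1 q - 1 else monom 1 q)" for i
  define H where "H = (\<Sum>i<(n + q) * p. if i mod p = j then smult (of_int (digit x i)) (W i) else 0)"
  have W_int: "int_poly (W i)" for i
    unfolding W_def by (simp add: int_poly_mult int_poly_diff int_poly_monom int_poly_one)
  have "int_poly H"
    unfolding H_def
  proof (rule int_poly_sum)
    fix i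
    show "int_poly (if i mod p = j then smult (of_int (digit x i)) (W i) else 0)"
      using W_int[of i] by (simp add: int_poly_smult)
  qed
  have scaled_summand: "(\<delta> ^ q - 1) * \<delta> ^ (n + q) *
      (if i mod p = j then digit x i * tail_weight n q i / \<delta> ^ (i div p) else 0)
    = poly (if i mod p = j then smult (of_int (digit x i)) (W i) else 0) \<delta>"
    if "i < (n + q) * p" for i
  proof (cases "i mod p = j")
    case True
    have "(\<delta> ^ q - 1) * \<delta> ^ (n + q) * (tail_weight n q i / \<delta> ^ (i div p)) = poly (W i) \<delta>"
      unfolding W_def by (rule tail_weight_scaled[OF assms that])
    moreover have "(\<delta> ^ q - 1) * \<delta> ^ (n + q) * (digit x i * tail_weight n q i / \<delta> ^ (i div p))
        = digit x i * ((\<delta> ^ q - 1) * \<delta> ^ (n + q) * (tail_weight n q i / \<delta> ^ (i div p)))"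
      by (simp add: mult_ac)
    ultimately show ?thesis
      using True by simp
  qed simp
  have "(\<delta> ^ q - 1) * \<delta> ^ (n + q) * place_coeff x n q j
      = (\<Sum>i<(n + q) * p. (\<delta> ^ q - 1) * \<delta> ^ (n + q) *
          (if i mod p = j then digit x i * tail_weight n q i / \<delta> ^ (i div p) else 0))"
    unfolding place_coeff_def by (rule sum_distrib_left)
  also have "\<dots> = poly H \<delta>"
    unfolding H_def poly_sum using scaled_summand by (intro sum.cong) auto
  finally have "(\<delta> ^ q - 1) * \<delta> ^ (n + q) * place_coeff x n q j = poly H \<delta>" .
  with \<open>int_poly H\<close> show ?thesis
    by (rule that)
qed

lemma place_coeff_in_Q_adjoin:
  assumes "q > 0"
  shows "place_coeff x n q j \<in> Q_adjoin \<delta>"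
proof -
  obtain H where H: "int_poly H" "(\<delta> ^ q - 1) * \<delta> ^ (n + q) * place_coeff x n q j = poly H \<delta>"
    using place_coeff_int_poly[OF assms] .
  have "(\<delta> ^ q - 1) * \<delta> ^ (n + q) \<noteq> 0"
    using one_less_power[OF delta_gt_1 assms] delta_gt_1 by auto
  then have "place_coeff x n q j = poly H \<delta> / ((\<delta> ^ q - 1) * \<delta> ^ (n + q))"
    using H(2) by (simp add: field_simps)
  then show ?thesis
    using H(1) Q_adjoin_Rats[of 1 \<delta>]
    by (auto intro!: Q_adjoin_divide Q_adjoin_mult Q_adjoin_diff Q_adjoin_power Q_adjoin_self Q_adjoin_poly)
qed


lemma rational_just_above_place_value:
  assumes "\<eta> > 0"
  obtains x where "x \<in> \<rat>" "0 \<le> x" "x < 1 / base_prod K" "x < place_value K + \<eta>" "digit x K \<ge> 1"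
proof -
  have "place_value K < 1 / base_prod K"
    unfolding place_value_def using strict_monoD[OF strict_mono_base_prod, of K "Suc K"] base_prod_pos[of K]
    by (simp add: frac_less2)
  with assms obtain x where x: "x \<in> \<rat>" "place_value K < x" "x < 1 / base_prod K" "x < place_value K + \<eta>"
    using Rats_dense_in_real[of "place_value K" "min (1 / base_prod K) (place_value K + \<eta>)"] by auto
  have "0 \<le> x"
    using x(2) place_value_pos[of K] by simp
  moreover have "digit x K \<ge> 1"
    using x(2,3) base_prod_pos[of K] base_prod_pos[of "Suc K"]
    by (intro digit_ge_1[OF \<open>0 \<le> x\<close>]) (auto simp: place_value_def field_simps)
  ultimately show ?thesis
    using that x(1,3,4) by blast
qed

text \<open>
  All terms are nonnegative and digit \<open>K\<close> alone contributes at least \<open>place_value K\<close>, so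
  little is left for the others.
\<close>
lemma periodic_expansion_concentrated:
  assumes x: "0 \<le> x" "x < 1" "eventually_periodic (digit x)"
    and digit_K: "digit x K \<ge> 1" and x_below: "x < place_value K + \<eta>"
  obtains h where "\<forall>j<p. h j \<in> Q_adjoin \<delta>" "x = (\<Sum>j<p. place_value j * h j)"
    "\<forall>j<p. \<bar>h j - (if j = K mod p then 1 / \<delta> ^ (K div p) else 0)\<bar> < \<eta> / place_value j"
proof -
  obtain n q where nq: "n \<ge> K div p + 1" "q > 0" "rem x (n * p) = rem x ((n + q) * p)"
    by (rule rem_block_periodic[OF x, where m = "K div p + 1"])
  define h where "h = place_coeff x n q"
  have x_eq: "x = (\<Sum>j<p. place_value j * h j)"
    unfolding h_def by (rule expansion_place_coeff[OF nq(2,3)])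
  have "K < (K div p + 1) * p"
    using div_mult_mod_eq[of K p] mod_less_divisor[OF length_pos, of K] unfolding add_mult_distrib by linarith
  also have "\<dots> \<le> n * p"
    using nq(1) by (rule mult_le_mono1)
  finally have "digit x K / \<delta> ^ (K div p) \<le> h (K mod p)"
    using place_coeff_ge_digit[OF x(1,2) nq(2)] unfolding h_def by simp
  moreover have "1 / \<delta> ^ (K div p) \<le> digit x K / \<delta> ^ (K div p)"
    using digit_K delta_gt_1 by (simp add: divide_right_mono)
  ultimately have h_K: "1 / \<delta> ^ (K div p) \<le> h (K mod p)"
    by linarith
  have "(\<Sum>j<p. place_value j * h j) < place_value (K mod p) * (1 / \<delta> ^ (K div p)) + \<eta>"
    using x_below x_eq place_value_blocks[of K] by simp
  then have "\<forall>j<p. \<bar>h j - (if j = K mod p then 1 / \<delta> ^ (K div p) else 0)\<bar> < \<eta> / place_value j"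
    using length_pos place_value_pos place_coeff_nonneg[OF x(1,2) nq(2)] h_K
    by (intro allI impI weighted_sum_concentrated[of "{..<p}"]) (auto simp: h_def)
  moreover have "\<forall>j<p. h j \<in> Q_adjoin \<delta>"
    unfolding h_def using place_coeff_in_Q_adjoin[OF nq(2)] by blast
  ultimately show ?thesis
    using that x_eq by blast
qed

text \<open>
  \<open>F = (X\<^sup>q - 1) X\<^sup>n\<^sup>+\<^sup>q Q\<close> clears the denominators \<open>(\<delta>\<^sup>q - 1) \<delta>\<^sup>n\<^sup>+\<^sup>q\<close> of the place
  coefficients and the common denominator \<open>Q(\<delta>)\<close> of the place values.
\<close>
lemma periodic_expansion_poly_relation:
  assumes x: "0 \<le> x" "x < 1" "eventually_periodic (digit x)"
    and Q: "int_poly Q" and R: "\<And>j. j < p \<Longrightarrow> int_poly (R j) \<and> place_value j * poly Q \<delta> = poly (R j) \<delta>"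
  obtains F G where "int_poly F" "int_poly G" "lead_coeff F = lead_coeff Q" "x * poly F \<delta> = poly G \<delta>"
proof -
  obtain n q where nq: "q > 0" "rem x (n * p) = rem x ((n + q) * p)"
    using rem_block_periodic[OF x, where m = 0] by blast
  have "\<forall>j. \<exists>H. int_poly H \<and> (\<delta> ^ q - 1) * \<delta> ^ (n + q) * place_coeff x n q j = poly H \<delta>"
    using place_coeff_int_poly[OF nq(1)] by blast
  then obtain H where H: "\<And>j. int_poly (H j)"
    "\<And>j. (\<delta> ^ q - 1) * \<delta> ^ (n + q) * place_coeff x n q j = poly (H j) \<delta>"
    by metis
  define F where "F = (monom 1 q - 1) * monom 1 (n + q) * Q"
  define G where "G = (\<Sum>j<p. R j * H j)"
  show ?thesis
  proof (rule that[of F G])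
    show "int_poly F"
      unfolding F_def using Q by (simp add: int_poly_mult int_poly_diff int_poly_monom int_poly_one)
    show "int_poly G"
      unfolding G_def using R H(1) by (intro int_poly_sum int_poly_mult) auto
    show "lead_coeff F = lead_coeff Q"
      unfolding F_def lead_coeff_mult lead_coeff_monom_minus_1[OF nq(1)] lead_coeff_monom by (simp only: mult_1)
    define D where "D = (\<delta> ^ q - 1) * \<delta> ^ (n + q)"
    have "x * poly F \<delta> = D * poly Q \<delta> * x"
      unfolding F_def D_def by (simp add: poly_monom algebra_simps)
    also have "\<dots> = (\<Sum>j<p. (place_value j * poly Q \<delta>) * (D * place_coeff x n q j))"
      by (subst (1) expansion_place_coeff[OF nq]) (simp add: sum_distrib_left mult_ac)
    also have "\<dots> = poly G \<delta>"
      unfolding G_def poly_sum D_def using R H(2) by (intro sum.cong) auto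
    finally show "x * poly F \<delta> = poly G \<delta>" .
  qed
qed

end

section \<open>Bases for which small rationals have periodic expansions\<close>

locale alt_base_periodic_rationals = alt_base_expansion +
  fixes \<gamma> :: real
  assumes \<gamma>_pos: "\<gamma> > 0"
    and rationals_periodic: "\<forall>x\<in>\<rat>. 0 \<le> x \<and> x < \<gamma> \<and> x < 1 \<longrightarrow> eventually_periodic (digit x)"
begin

lemma rational_concentrated_at:
  assumes s: "s < p" and "\<eta> > 0" and k: "1 / \<gamma> < \<delta> ^ k"
  obtains x h where "x \<in> \<rat>" "\<forall>j<p. h j \<in> Q_adjoin \<delta>" "x = (\<Sum>j<p. place_value j * h j)"
    "\<forall>j<p. \<bar>h j - (if j = s then 1 / \<delta> ^ k else 0)\<bar> < \<eta> / place_value j"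
proof -
  define K where "K = k * p + s"
  have K: "K mod p = s" "K div p = k"
    using s length_pos unfolding K_def by (simp_all add: add.commute[of "k * p"])
  obtain x where x: "x \<in> \<rat>" "0 \<le> x" "x < 1 / base_prod K" "x < place_value K + \<eta>" "digit x K \<ge> 1"
    using rational_just_above_place_value[OF \<open>\<eta> > 0\<close>] by blast
  have dk: "\<delta> ^ k > 0"
    using delta_gt_1 by simp
  have "1 / base_prod K \<le> 1 / \<delta> ^ k"
    unfolding K_def base_prod_blocks using base_prod_ge_1[of s] dk by (simp add: frac_le)
  moreover have "1 / \<delta> ^ k < \<gamma>"
    using k \<gamma>_pos dk by (simp add: field_simps)
  moreover have "1 / \<delta> ^ k \<le> 1"
    using one_le_power[of \<delta> k] delta_gt_1 by simp
  ultimately have "x < \<gamma>" "x < 1"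
    using x(3) by linarith+
  then have "eventually_periodic (digit x)"
    using rationals_periodic x(1,2) by blast
  then obtain h where "\<forall>j<p. h j \<in> Q_adjoin \<delta>" "x = (\<Sum>j<p. place_value j * h j)"
    "\<forall>j<p. \<bar>h j - (if j = K mod p then 1 / \<delta> ^ (K div p) else 0)\<bar> < \<eta> / place_value j"
    by (rule periodic_expansion_concentrated[OF x(2) \<open>x < 1\<close> _ x(5,4)])
  then show ?thesis
    using that x(1) unfolding K by blast
qed

lemma approximate_unit_row:
  assumes s: "s < p" and \<epsilon>: "\<epsilon> > 0"
  obtains row where "\<forall>j<p. row j \<in> Q_adjoin \<delta>" "\<forall>j<p. \<bar>row j - (if j = s then 1 else 0)\<bar> \<le> \<epsilon>"
    "(\<Sum>j<p. row j * place_value j) \<in> Q_adjoin \<delta>"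
proof -
  obtain k where k: "1 / \<gamma> < \<delta> ^ k"
    using real_arch_pow[OF delta_gt_1] by blast
  have dk: "\<delta> ^ k > 0"
    using delta_gt_1 by simp
  define \<eta> where "\<eta> = \<epsilon> / \<delta> ^ (k + 1)"
  have "\<eta> > 0"
    unfolding \<eta>_def using \<epsilon> delta_gt_1 by simp
  then obtain x h where x: "x \<in> \<rat>" and h: "\<forall>j<p. h j \<in> Q_adjoin \<delta>" "x = (\<Sum>j<p. place_value j * h j)"
    "\<forall>j<p. \<bar>h j - (if j = s then 1 / \<delta> ^ k else 0)\<bar> < \<eta> / place_value j"
    using rational_concentrated_at[OF s _ k] by blast
  show ?thesis
  proof (rule that[of "\<lambda>j. \<delta> ^ k * h j"])
    show "\<forall>j<p. \<delta> ^ k * h j \<in> Q_adjoin \<delta>"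
      using h(1) by (blast intro: Q_adjoin_mult Q_adjoin_power Q_adjoin_self)
    show "\<forall>j<p. \<bar>\<delta> ^ k * h j - (if j = s then 1 else 0)\<bar> \<le> \<epsilon>"
    proof (intro allI impI)
      fix j assume j: "j < p"
      have "\<delta> ^ k * h j - (if j = s then 1 else 0) = \<delta> ^ k * (h j - (if j = s then 1 / \<delta> ^ k else 0))"
        using dk delta_gt_1 by (cases "j = s") (simp_all add: right_diff_distrib)
      then have "\<bar>\<delta> ^ k * h j - (if j = s then 1 else 0)\<bar> = \<delta> ^ k * \<bar>h j - (if j = s then 1 / \<delta> ^ k else 0)\<bar>"
        using dk by (simp add: abs_mult)
      also have "\<dots> \<le> \<delta> ^ k * (\<eta> * base_prod (Suc j))"
        using h(3) j dk unfolding place_value_def by (simp add: less_imp_le)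
      also have "\<dots> \<le> \<delta> ^ k * (\<eta> * \<delta>)"
        using base_prod_le_delta[OF j] \<open>\<eta> > 0\<close> dk by simp
      also have "\<dots> = \<epsilon>"
        unfolding \<eta>_def using delta_gt_1 by (simp add: field_simps)
      finally show "\<bar>\<delta> ^ k * h j - (if j = s then 1 else 0)\<bar> \<le> \<epsilon>" .
    qed
    have "(\<Sum>j<p. \<delta> ^ k * h j * place_value j) = \<delta> ^ k * x"
      unfolding h(2) by (simp add: sum_distrib_left mult_ac)
    then show "(\<Sum>j<p. \<delta> ^ k * h j * place_value j) \<in> Q_adjoin \<delta>"
      using Q_adjoin_mult[OF Q_adjoin_power[OF Q_adjoin_self] Q_adjoin_Rats[OF x]] by simp
  qed
qed

lemma place_value_in_Q_adjoin: "\<forall>j<p. place_value j \<in> Q_adjoin \<delta>"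
proof -
  define \<epsilon> :: real where "\<epsilon> = 1 / (2 * p)"
  have "\<epsilon> > 0"
    unfolding \<epsilon>_def using length_pos by simp
  then have "\<forall>s. \<exists>row. s < p \<longrightarrow> (\<forall>j<p. row j \<in> Q_adjoin \<delta>)
      \<and> (\<forall>j<p. \<bar>row j - (if j = s then 1 else 0)\<bar> \<le> \<epsilon>) \<and> (\<Sum>j<p. row j * place_value j) \<in> Q_adjoin \<delta>"
    by (metis approximate_unit_row)
  then obtain M where M: "\<forall>s. s < p \<longrightarrow> (\<forall>j<p. M s j \<in> Q_adjoin \<delta>)
      \<and> (\<forall>j<p. \<bar>M s j - (if j = s then 1 else 0)\<bar> \<le> \<epsilon>) \<and> (\<Sum>j<p. M s j * place_value j) \<in> Q_adjoin \<delta>"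
    by (rule exE[OF choice])
  have "strictly_diag_dominant p M"
    unfolding strictly_diag_dominant_def
  proof (intro allI impI)
    fix i assume i: "i < p"
    then have close: "\<bar>M i j - (if j = i then 1 else 0)\<bar> \<le> \<epsilon>" if "j < p" for j
      using M that by blast
    have "(\<Sum>j\<in>{..<p} - {i}. \<bar>M i j\<bar>) \<le> real (card ({..<p} - {i})) * \<epsilon>"
    proof (rule sum_bounded_above)
      fix j assume "j \<in> {..<p} - {i}"
      then show "\<bar>M i j\<bar> \<le> \<epsilon>"
        using close[of j] by auto
    qed
    also have "\<dots> = (real p - 1) / (2 * real p)"
      using i length_pos unfolding \<epsilon>_def by (simp add: of_nat_diff)
    also have "\<dots> < 1 - \<epsilon>"
      using length_pos unfolding \<epsilon>_def by (simp add: field_simps)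
    also have "1 - \<epsilon> \<le> \<bar>M i i\<bar>"
      using close[OF i] by simp
    finally show "(\<Sum>j\<in>{..<p} - {i}. \<bar>M i j\<bar>) < \<bar>M i i\<bar>" .
  qed
  then show ?thesis
    by (rule strictly_diag_dominant_solution_in_Q_adjoin) (simp_all add: M)
qed

lemma base_in_Q_adjoin:
  assumes "b \<in> set bs"
  shows "b \<in> Q_adjoin \<delta>"
proof -
  obtain j where j: "j < p" "b = base j"
    using assms unfolding base_def by (metis in_set_conv_nth mod_less)
  show ?thesis
  proof (cases j)
    case 0
    then have "b = 1 / place_value 0"
      using j unfolding place_value_def by (simp add: base_prod_Suc)
    then show ?thesis
      using place_value_in_Q_adjoin length_pos Q_adjoin_Rats[of 1 \<delta>] by (auto intro!: Q_adjoin_divide)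
  next
    case (Suc i)
    then have "b = place_value i / place_value j"
      using j Suc base_prod_pos[of j] unfolding place_value_def by (simp add: base_prod_Suc[of "Suc i"])
    then show ?thesis
      using place_value_in_Q_adjoin j Suc by (auto intro!: Q_adjoin_divide)
  qed
qed

lemma delta_algebraic: "algebraic \<delta>"
proof -
  obtain Q R where Q: "int_poly Q" "poly Q \<delta> \<noteq> 0"
    and R: "\<And>j. j \<in> {..<p} \<Longrightarrow> int_poly (R j) \<and> place_value j * poly Q \<delta> = poly (R j) \<delta>"
    using Q_adjoin_common_denominator[of "{..<p}" place_value \<delta>] place_value_in_Q_adjoin by blast
  obtain N :: nat where N: "real N > \<bar>lead_coeff Q\<bar> + 1 / \<gamma> + 1"
    using reals_Archimedean2 by blast
  have "1 / \<gamma> > 0"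
    using \<gamma>_pos by simp
  then have N_large: "real N > 1" "real N > 1 / \<gamma>" "real N > \<bar>lead_coeff Q\<bar>"
    using N abs_ge_zero[of "lead_coeff Q"] by linarith+
  then have x: "1 / real N \<in> \<rat>" "0 \<le> 1 / real N" "1 / real N < 1" "1 / real N < \<gamma>"
    using \<gamma>_pos by (auto simp: field_simps)
  then obtain F G where FG: "int_poly F" "int_poly G" "lead_coeff F = lead_coeff Q"
    "1 / real N * poly F \<delta> = poly G \<delta>"
    using periodic_expansion_poly_relation[OF x(2,3) _ Q(1), of R] rationals_periodic R by blast
  show ?thesis
  proof (rule algebraic_if_poly_eq_multiple[OF FG(1,2)])
    show "F \<noteq> 0" "\<bar>lead_coeff F\<bar> < real N"
      using FG(3) Q(2) N_large(3) by auto
    show "poly F \<delta> = real N * poly G \<delta>"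
      using FG(4) N_large(1) by (simp add: field_simps)
  qed
qed

end

theorem lemma2:
  fixes bs :: "real list" and \<gamma> :: real
  assumes "alt_base bs"
    and "\<gamma> > 0"
    and "\<forall>x\<in>\<rat>. 0 \<le> x \<and> x < \<gamma> \<and> x < 1 \<longrightarrow> eventually_periodic (alt_digit bs x)"
  shows "algebraic (prod_list bs) \<and> (\<forall>b\<in>set bs. in_Q_adjoin (prod_list bs) b)"
proof -
  interpret alt_base_periodic_rationals bs \<gamma>
    using assms by unfold_locales
  show ?thesis
    using delta_algebraic base_in_Q_adjoin in_Q_adjoin_if_mem_Q_adjoin by blast
qed

end
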